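(* Let $s\ge1$, let $E_1,\ldots,E_s,F_1,\ldots,F_s$ be real numbers, and let $Z_j=\{F_j,\,E_j+F_j+1\}$ for $j=1,\ldots,s$. Suppose that for every $r=1,2,\ldots,s$, $$E_r+F_r+1+\max\big(Z_{r+1}+Z_{r+2}+\cdots+Z_s\big)<0.$$ Then the multiple series $$\sum_{k_1,\ldots,k_s\ge0}\ \prod_{j=1}^{s}(k_j+1)^{E_j}\,(k_1+\cdots+k_j+1)^{F_j}$$ converges.
   Context: For sets $S,T$ of reals, $S+T=\{x+y: x\in S,\ y\in T\}$ is the sum-set; for $r=s$ the sum-set $Z_{r+1}+\cdots+Z_s$ is empty of summands and is interpreted as $\{0\}$, so the condition reads $E_s+F_s+1<0$. *)

theory Defs
  imports "HOL-Analysis.Analysis"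
begin

definition sumset :: "real set \<Rightarrow> real set \<Rightarrow> real set" where
  "sumset S T = {x + y | x y. x \<in> S \<and> y \<in> T}"

text \<open>Iterated sum-set Z_(m+1) + ... + Z_s over the indices j with m < j <= s;
  the empty sum-set (m >= s) is {0}.\<close>
fun sumset_range :: "(nat \<Rightarrow> real set) \<Rightarrow> nat \<Rightarrow> nat \<Rightarrow> real set" where
  "sumset_range Z m 0 = {0}"
| "sumset_range Z m (Suc s) =
     (if m < Suc s then sumset (sumset_range Z m s) (Z (Suc s)) else {0})"

end

theory Submission
  imports Defs
begin

text \<open>Write \<open>K\<^sub>j = k\<^sub>1 + \<dots> + k\<^sub>j\<close>. The factor for \<open>j = s\<close> is bounded by
  \<open>(k\<^sub>s + 1)\<^sup>p (K\<^sub>s\<^sub>-\<^sub>1 + 1)\<^sup>G\<close> with \<open>p < -1\<close> and \<open>G\<close> slightly above \<open>max Z\<^sub>s\<close>; the second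
  factor is absorbed into the exponent \<open>F\<^sub>s\<^sub>-\<^sub>1\<close>, and the hypothesis for \<open>s\<close> variables turns
  into the hypothesis for the first \<open>s - 1\<close> variables with the shifted exponent. By induction
  the summand is dominated by a product \<open>\<Prod>\<^sub>j (k\<^sub>j + 1)\<^sup>p\<^sup>\<^sub>j\<close> with all \<open>p\<^sub>j < -1\<close>, a
  product of convergent p-series.\<close>

lemma sumset_eq_image: "sumset S T = (\<lambda>(x, y). x + y) ` (S \<times> T)"
  unfolding sumset_def by auto

lemma finite_sumset: "finite S \<Longrightarrow> finite T \<Longrightarrow> finite (sumset S T)"
  by (simp add: sumset_eq_image)

lemma sumset_eq_empty_iff: "sumset S T = {} \<longleftrightarrow> S = {} \<or> T = {}"
  by (simp add: sumset_eq_image)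

lemma Max_sumset:
  assumes "finite S" "finite T" "S \<noteq> {}" "T \<noteq> {}"
  shows "Max (sumset S T) = Max S + Max T"
proof (rule Max_eqI)
  show "finite (sumset S T)"
    using assms by (simp add: finite_sumset)
  show "z \<le> Max S + Max T" if "z \<in> sumset S T" for z
    using that assms by (auto simp: sumset_def intro: add_mono)
  have "Max S \<in> S" "Max T \<in> T"
    using assms by simp_all
  then show "Max S + Max T \<in> sumset S T"
    unfolding sumset_def by blast
qed

lemma finite_sumset_range: "(\<And>j. finite (Z j)) \<Longrightarrow> finite (sumset_range Z m s)"
  by (induction s) (simp_all add: finite_sumset)

lemma sumset_range_nonempty: "(\<And>j. Z j \<noteq> {}) \<Longrightarrow> sumset_range Z m s \<noteq> {}"
  by (induction s) (simp_all add: sumset_eq_empty_iff)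

lemma Max_sumset_range:
  assumes "\<And>j. finite (Z j)" "\<And>j. Z j \<noteq> {}"
  shows "Max (sumset_range Z m s) = (\<Sum>j\<in>{m<..s}. Max (Z j))"
proof (induction s)
  case (Suc s)
  show ?case
  proof (cases "m < Suc s")
    case True
    then have "{m<..Suc s} = insert (Suc s) {m<..s}"
      by auto
    then show ?thesis
      using True Suc assms finite_sumset_range[of Z] sumset_range_nonempty[of Z]
      by (simp add: Max_sumset add.commute)
  qed simp
qed simp

lemma finite_negative_margin:
  fixes a :: "'a \<Rightarrow> real"
  assumes "finite S" and "\<And>r. r \<in> S \<Longrightarrow> a r < 0"
  obtains e where "e > 0" and "\<And>r. r \<in> S \<Longrightarrow> a r + e < 0"
proof -
  have "\<forall>\<^sub>F e in at_right 0. a r + e < 0" if "r \<in> S" for r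
  proof -
    have "\<forall>\<^sub>F e in at_right 0. e < - a r"
      using assms(2)[OF that] by (intro order_tendstoD(2)[OF tendsto_ident_at]) simp
    then show ?thesis
      by eventually_elim simp
  qed
  then have "\<forall>\<^sub>F e in at_right 0. e > 0 \<and> (\<forall>r\<in>S. a r + e < 0)"
    using assms(1) by (intro eventually_conj eventually_at_right_less) (simp add: eventually_ball_finite)
  then have "\<exists>e. e > 0 \<and> (\<forall>r\<in>S. a r + e < 0)"
    by (rule eventually_happens'[rotated]) simp
  then show ?thesis
    using that by blast
qed

lemma exists_separated_powr_bound:
  fixes E F G :: real
  assumes "F \<le> G" "E + F + 1 < G" "E + F + 1 < 0"
  obtains p where "p < -1"
    and "\<And>x N. 0 \<le> x \<Longrightarrow> 0 \<le> N \<Longrightarrow> (x + 1) powr E * (N + x + 1) powr F \<le> (x + 1) powr p * (N + 1) powr G"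
proof (cases "F \<ge> 0")
  case True
  show ?thesis
  proof (rule that[of "E + F"])
    show "E + F < -1"
      using assms by simp
    fix x N :: real assume x: "0 \<le> x" and N: "0 \<le> N"
    have "(N + x + 1) powr F \<le> ((N + 1) * (x + 1)) powr F"
      using True x N by (intro powr_mono2) (auto simp: algebra_simps)
    also have "\<dots> \<le> (N + 1) powr G * (x + 1) powr F"
      using N x assms by (simp add: powr_mult mult_right_mono powr_mono)
    finally have "(x + 1) powr E * (N + x + 1) powr F \<le> (x + 1) powr E * ((N + 1) powr G * (x + 1) powr F)"
      by (intro mult_left_mono) auto
    then show "(x + 1) powr E * (N + x + 1) powr F \<le> (x + 1) powr (E + F) * (N + 1) powr G"
      by (simp add: powr_add ac_simps)
  qed
next
  case F_neg: False
  show ?thesis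
  proof (cases "E < -1")
    case True
    show ?thesis
    proof (rule that[of E])
      fix x N :: real assume x: "0 \<le> x" and N: "0 \<le> N"
      have "(N + x + 1) powr F \<le> (N + 1) powr F"
        using F_neg x N by (intro powr_mono2') auto
      also have "\<dots> \<le> (N + 1) powr G"
        using N assms by (intro powr_mono) auto
      finally show "(x + 1) powr E * (N + x + 1) powr F \<le> (x + 1) powr E * (N + 1) powr G"
        by (intro mult_left_mono) auto
    qed fact
  next
    case False
    \<comment> \<open>Move the factor \<open>(x + 1) powr (E + 1 + d)\<close>, whose exponent is nonnegative, onto
      \<open>N + x + 1\<close>; the resulting exponent \<open>E + F + 1 + d\<close> there is nonpositive and at most \<open>G\<close>.\<close>
    define d where "d = min (G - (E + F + 1)) (- (E + F + 1))"
    have d: "d > 0" "E + F + 1 + d \<le> 0" "E + F + 1 + d \<le> G"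
      using assms unfolding d_def by auto
    show ?thesis
    proof (rule that[of "-1 - d"])
      show "-1 - d < -1"
        using d by simp
      fix x N :: real assume x: "0 \<le> x" and N: "0 \<le> N"
      have "(x + 1) powr E = (x + 1) powr (-1 - d) * (x + 1) powr (E + 1 + d)"
        by (simp add: powr_add[symmetric])
      also have "\<dots> \<le> (x + 1) powr (-1 - d) * (N + x + 1) powr (E + 1 + d)"
        using False d x N by (intro mult_left_mono powr_mono2) auto
      finally have "(x + 1) powr E * (N + x + 1) powr F
          \<le> (x + 1) powr (-1 - d) * (N + x + 1) powr (E + 1 + d) * (N + x + 1) powr F"
        by (intro mult_right_mono) auto
      also have "\<dots> = (x + 1) powr (-1 - d) * (N + x + 1) powr (E + F + 1 + d)"
        by (simp add: powr_add[symmetric] mult.assoc add_ac)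
      also have "\<dots> \<le> (x + 1) powr (-1 - d) * (N + 1) powr (E + F + 1 + d)"
        using d x N by (intro mult_left_mono powr_mono2') auto
      also have "\<dots> \<le> (x + 1) powr (-1 - d) * (N + 1) powr G"
        using d N by (intro mult_left_mono powr_mono) auto
      finally show "(x + 1) powr E * (N + x + 1) powr F \<le> (x + 1) powr (-1 - d) * (N + 1) powr G" .
    qed
  qed
qed

definition convergence_condition :: "(nat \<Rightarrow> real) \<Rightarrow> (nat \<Rightarrow> real) \<Rightarrow> nat \<Rightarrow> bool" where
  "convergence_condition E F n \<longleftrightarrow>
     (\<forall>r\<in>{1..n}. E r + F r + 1 + (\<Sum>j\<in>{r<..n}. max (F j) (E j + F j + 1)) < 0)"

definition summand :: "(nat \<Rightarrow> real) \<Rightarrow> (nat \<Rightarrow> real) \<Rightarrow> nat \<Rightarrow> (nat \<Rightarrow> nat) \<Rightarrow> real" where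
  "summand E F n k = (\<Prod>j\<in>{1..n}. (real (k j) + 1) powr E j * (real (\<Sum>i\<in>{1..j}. k i) + 1) powr F j)"

lemma summand_nonneg: "0 \<le> summand E F n k"
  by (simp add: summand_def prod_nonneg)

lemma convergence_condition_last:
  assumes "convergence_condition E F n" "1 \<le> n"
  shows "E n + F n + 1 < 0"
proof -
  have "E n + F n + 1 + (\<Sum>j\<in>{n<..n}. max (F j) (E j + F j + 1)) < 0"
    using assms unfolding convergence_condition_def by (meson atLeastAtMost_iff order_refl)
  then show ?thesis
    by simp
qed

lemma convergence_condition_absorb_last:
  assumes "convergence_condition E F (Suc n)"
  obtains G where "max (F (Suc n)) (E (Suc n) + F (Suc n) + 1) < G"
    and "convergence_condition E (F(n := F n + G)) n"
proof -
  define M where "M j = max (F j) (E j + F j + 1)" for j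
  define a where "a r = E r + F r + 1 + (\<Sum>j\<in>{r<..Suc n}. M j)" for r
  have "a r < 0" if "r \<in> {1..Suc n}" for r
    using assms that unfolding convergence_condition_def a_def M_def by blast
  then obtain e where e: "e > 0" "\<And>r. r \<in> {1..Suc n} \<Longrightarrow> a r + e < 0"
    using finite_negative_margin[of "{1..Suc n}" a] by blast
  define G where "G = M (Suc n) + e"
  define F' where "F' = F(n := F n + G)"
  have "E r + F' r + 1 + (\<Sum>j\<in>{r<..n}. max (F' j) (E j + F' j + 1)) < 0" if r: "r \<in> {1..n}" for r
  proof -
    have shift: "max (F' j) (E j + F' j + 1) = M j + (if j = n then G else 0)" for j
      unfolding F'_def M_def by auto
    have "(\<Sum>j\<in>{r<..n}. max (F' j) (E j + F' j + 1)) = (\<Sum>j\<in>{r<..n}. M j) + (if r < n then G else 0)"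
      by (simp only: shift sum.distrib) simp
    moreover have "F' r = F r + (if r = n then G else 0)"
      by (simp add: F'_def)
    ultimately have "F' r + (\<Sum>j\<in>{r<..n}. max (F' j) (E j + F' j + 1)) = F r + (\<Sum>j\<in>{r<..n}. M j) + G"
      using r by auto
    moreover have "{r<..Suc n} = insert (Suc n) {r<..n}"
      using r by auto
    ultimately show ?thesis
      using e(2)[of r] r by (simp add: G_def a_def)
  qed
  then have "convergence_condition E F' n"
    unfolding convergence_condition_def by blast
  moreover have "max (F (Suc n)) (E (Suc n) + F (Suc n) + 1) < G"
    using e(1) by (simp add: G_def M_def)
  ultimately show ?thesis
    using that unfolding F'_def by blast
qed

lemma summand_Suc:
  "summand E F (Suc n) k = summand E F n k *
     ((real (k (Suc n)) + 1) powr E (Suc n) * (real (\<Sum>i\<in>{1..n}. k i) + real (k (Suc n)) + 1) powr F (Suc n))"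
  by (simp add: summand_def prod.cl_ivl_Suc sum.cl_ivl_Suc)

lemma summand_shift_last_exponent:
  "summand E (F(n := F n + G)) n k = summand E F n k * (real (\<Sum>i\<in>{1..n}. k i) + 1) powr G"
proof (cases n)
  case (Suc m)
  then show ?thesis
    by (simp add: summand_def prod.cl_ivl_Suc powr_add)
qed (simp add: summand_def)

lemma summand_dominated_by_separable:
  assumes "convergence_condition E F n"
  obtains p where "\<And>j. j \<in> {1..n} \<Longrightarrow> p j < -1"
    and "\<And>k. summand E F n k \<le> (\<Prod>j\<in>{1..n}. (real (k j) + 1) powr p j)"
  using assms
proof (induction n arbitrary: F thesis)
  case 0
  then show ?case
    by (simp add: summand_def)
next
  case (Suc n)
  obtain G where G: "max (F (Suc n)) (E (Suc n) + F (Suc n) + 1) < G"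
    and cond: "convergence_condition E (F(n := F n + G)) n"
    using convergence_condition_absorb_last[OF Suc.prems(2)] .
  obtain q where q: "q < -1" and last:
    "\<And>x N. 0 \<le> x \<Longrightarrow> 0 \<le> N \<Longrightarrow>
       (x + 1) powr E (Suc n) * (N + x + 1) powr F (Suc n) \<le> (x + 1) powr q * (N + 1) powr G"
    using exists_separated_powr_bound[of "F (Suc n)" G "E (Suc n)"] G
      convergence_condition_last[OF Suc.prems(2)] by auto
  obtain p where p: "\<And>j. j \<in> {1..n} \<Longrightarrow> p j < -1"
    and dom: "\<And>k. summand E (F(n := F n + G)) n k \<le> (\<Prod>j\<in>{1..n}. (real (k j) + 1) powr p j)"
    using Suc.IH[OF _ cond] by blast
  show ?case
  proof (rule Suc.prems(1)[of "p(Suc n := q)"])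
    show "(p(Suc n := q)) j < -1" if "j \<in> {1..Suc n}" for j
      using that p q by (cases "j = Suc n") auto
    fix k :: "nat \<Rightarrow> nat"
    define K where "K = real (\<Sum>i\<in>{1..n}. k i)"
    have "(real (k (Suc n)) + 1) powr E (Suc n) * (K + real (k (Suc n)) + 1) powr F (Suc n)
        \<le> (real (k (Suc n)) + 1) powr q * (K + 1) powr G"
      by (rule last) (simp_all only: K_def of_nat_0_le_iff)
    then have "summand E F (Suc n) k
        \<le> summand E F n k * ((real (k (Suc n)) + 1) powr q * (K + 1) powr G)"
      unfolding summand_Suc K_def[symmetric]
      by (intro mult_left_mono) (simp_all add: summand_nonneg)
    also have "\<dots> = summand E (F(n := F n + G)) n k * (real (k (Suc n)) + 1) powr q"
      by (simp add: summand_shift_last_exponent K_def)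
    also have "\<dots> \<le> (\<Prod>j\<in>{1..n}. (real (k j) + 1) powr p j) * (real (k (Suc n)) + 1) powr q"
      by (intro mult_right_mono dom) auto
    also have "\<dots> = (\<Prod>j\<in>{1..Suc n}. (real (k j) + 1) powr (p(Suc n := q)) j)"
      by (simp add: prod.cl_ivl_Suc)
    finally show "summand E F (Suc n) k \<le> \<dots>" .
  qed
qed

lemma summable_on_powr_Suc:
  fixes p :: real
  assumes "p < -1"
  shows "(\<lambda>n::nat. (real n + 1) powr p) summable_on UNIV"
proof -
  have "summable (\<lambda>n::nat. real (Suc n) powr p)"
    using assms by (subst summable_Suc_iff) (simp add: summable_real_powr_iff)
  then show ?thesis
    by (subst summable_on_UNIV_nonneg_real_iff) (simp_all add: add.commute)
qed

lemma abs_summable_on_prod_PiE':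
  fixes f :: "'a \<Rightarrow> 'b \<Rightarrow> 'c :: {real_normed_field, banach, second_countable_topology}"
  assumes "finite A" and "\<And>x. x \<in> A \<Longrightarrow> countable (B x)"
    and "\<And>x. x \<in> A \<Longrightarrow> Infinite_Sum.abs_summable_on (f x) (B x)"
  shows "Infinite_Sum.abs_summable_on (\<lambda>g. \<Prod>x\<in>A. f x (g x)) (PiE A B)"
  using assms by (simp add: abs_summable_equivalent abs_summable_on_prod_PiE)

theorem lemma3p4:
  fixes s :: nat and E F :: "nat \<Rightarrow> real"
  assumes "s \<ge> 1"
  assumes "\<And>r. 1 \<le> r \<Longrightarrow> r \<le> s \<Longrightarrow>
      E r + F r + 1 + Max (sumset_range (\<lambda>j. {F j, E j + F j + 1}) r s) < 0"
  shows "(\<lambda>k. \<Prod>j\<in>{1..s}. (real (k j) + 1) powr E j * (real (\<Sum>i\<in>{1..j}. k i) + 1) powr F j)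
           summable_on (PiE {1..s} (\<lambda>_. UNIV))"
proof -
  have "convergence_condition E F s"
    using assms(2) by (simp add: convergence_condition_def Max_sumset_range)
  then obtain p where p: "\<And>j. j \<in> {1..s} \<Longrightarrow> p j < -1"
    and dom: "\<And>k. summand E F s k \<le> (\<Prod>j\<in>{1..s}. (real (k j) + 1) powr p j)"
    using summand_dominated_by_separable by blast
  have "Infinite_Sum.abs_summable_on (\<lambda>k. \<Prod>j\<in>{1..s}. (real (k j) + 1) powr p j) (PiE {1..s} (\<lambda>_. UNIV))"
    using p by (intro abs_summable_on_prod_PiE') (simp_all add: summable_on_powr_Suc)
  then have "summand E F s summable_on PiE {1..s} (\<lambda>_. UNIV)"
  proof (rule summable_on_comparison_test)
    show "summand E F s k \<le> norm (\<Prod>j\<in>{1..s}. (real (k j) + 1) powr p j)" for k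
      unfolding real_norm_def by (rule order_trans[OF dom abs_ge_self])
  qed (rule summand_nonneg)
  then show ?thesis
    unfolding summand_def .
qed

end
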